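(* The algorithm BudgetFPT described in the context, run on an instance with budget $b$, $s$ entry nodes, maximum attack path length $l$ and $n$ nodes, has running time \[O\left(l^b \binom{b+s-1}{b} n\right).\]
   Context: An instance consists of a directed graph $G=(V,E)$ with $n=|V|$ nodes, a destination node $\mathrm{DA}$, $s$ entry nodes (uniformly likely), a set of blockable edges $E_b\subseteq E$, and a budget $b$. For a set $B\subseteq E_b$ of blocked edges, $|SP(s_i,G-B)|$ is the number of edges of a shortest path from entry node $s_i$ to $\mathrm{DA}$ in $G-B$ ($+\infty$ if none), and $f$ is a fixed decreasing function with $f(+\infty)=0$; the goal is to minimize $\frac1s\sum_i f(|SP(s_i,G-B)|)$ over $B\subseteq E_b$, $|B|\le b$. The maximum attack path length $l$ is the maximum number of edges of a path to $\mathrm{DA}$ in $G$. As a standing assumption, graphs are tree-like with $m=|E|=O(n)$. Algorithm BudgetFPT$(G,b)$: if $b=0$, compute by breadth-first search from $\mathrm{DA}$ the distances of all remaining entry nodes to $\mathrm{DA}$ and return $\sum_i f(\mathrm{dist}(s_i))/s$; if no entry nodes remain, return $0$. Otherwise pick an arbitrary remaining entry node $s_1$ and an arbitrary shortest path $p$ from $s_1$ to $\mathrm{DA}$. Record the value BudgetFPT$(G',b)+f(\mathrm{dist}(s_1))/s$, where $G'$ is $G$ with $s_1$ no longer treated as an entry node; and for every blockable edge $e$ on $p$, record BudgetFPT$(G-e,b-1)$. Return the minimum recorded value. *)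

theory Defs
  imports Complex_Main "HOL-Library.Extended_Nat"
begin

definition is_path :: "('v \<times> 'v) set \<Rightarrow> 'v list \<Rightarrow> 'v \<Rightarrow> 'v \<Rightarrow> bool" where
  "is_path E xs u v \<longleftrightarrow> xs \<noteq> [] \<and> hd xs = u \<and> last xs = v \<and>
     (\<forall>i. Suc i < length xs \<longrightarrow> (xs ! i, xs ! Suc i) \<in> E)"

definition dist :: "('v \<times> 'v) set \<Rightarrow> 'v \<Rightarrow> 'v \<Rightarrow> enat" where
  "dist E u v = (INF xs \<in> {xs. is_path E xs u v}. enat (length xs - 1))"

definition max_attack_len :: "('v \<times> 'v) set \<Rightarrow> 'v \<Rightarrow> nat" where
  "max_attack_len E DA = Max {length xs - 1 | xs. (\<exists>u. is_path E xs u DA) \<and> distinct xs}"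

definition valid_instance :: "'v set \<Rightarrow> ('v \<times> 'v) set \<Rightarrow> ('v \<times> 'v) set \<Rightarrow> 'v \<Rightarrow> 'v set \<Rightarrow> bool" where
  "valid_instance V E Eb DA S \<longleftrightarrow> finite V \<and> E \<subseteq> V \<times> V \<and> DA \<in> V \<and> S \<subseteq> V \<and> Eb \<subseteq> E"

text \<open>The arbitrary choices of BudgetFPT, modelled as choice functions of the current
  state (current edge set, remaining entry nodes, remaining budget): pick chooses the
  remaining entry node s1, sp chooses a shortest path from s1 to DA (if one exists).\<close>
definition valid_choices ::
  "'v \<Rightarrow> (('v \<times> 'v) set \<Rightarrow> 'v set \<Rightarrow> nat \<Rightarrow> 'v) \<Rightarrow> (('v \<times> 'v) set \<Rightarrow> 'v set \<Rightarrow> nat \<Rightarrow> 'v list) \<Rightarrow> bool" where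
  "valid_choices DA pick sp \<longleftrightarrow>
     (\<forall>E S b. S \<noteq> {} \<longrightarrow> pick E S b \<in> S \<and>
        (dist E (pick E S b) DA \<noteq> \<infinity> \<longrightarrow>
           is_path E (sp E S b) (pick E S b) DA \<and>
           enat (length (sp E S b) - 1) = dist E (pick E S b) DA))"

text \<open>Result: (value, cost). Every call is
  charged |V| + |E| (current graph), accounting for the breadth-first search /
  shortest-path computation and building the graph of the call. s0 is the original
  number s of entry nodes. The guard "finite S and u in S" only serves totality; it
  always holds for valid choices.\<close>
function budget_fpt ::
  "'v set \<Rightarrow> ('v \<times> 'v) set \<Rightarrow> 'v \<Rightarrow> (enat \<Rightarrow> real) \<Rightarrow> nat \<Rightarrow>
   (('v \<times> 'v) set \<Rightarrow> 'v set \<Rightarrow> nat \<Rightarrow> 'v) \<Rightarrow> (('v \<times> 'v) set \<Rightarrow> 'v set \<Rightarrow> nat \<Rightarrow> 'v list) \<Rightarrow>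
   ('v \<times> 'v) set \<Rightarrow> 'v set \<Rightarrow> nat \<Rightarrow> real \<times> nat" where
  "budget_fpt V Eb DA f s0 pick sp E S b =
    (if b = 0 then ((\<Sum>u\<in>S. f (dist E u DA)) / real s0, card V + card E)
     else if S = {} then (0, card V + card E)
     else
       (let u = pick E S b;
            p = (if dist E u DA = \<infinity> then [] else sp E S b);
            blk = remdups (filter (\<lambda>e. e \<in> Eb) (zip p (tl p)));
            r0 = (if finite S \<and> u \<in> S then budget_fpt V Eb DA f s0 pick sp E (S - {u}) b
                  else (0, 0));
            rs = map (\<lambda>e. budget_fpt V Eb DA f s0 pick sp (E - {e}) S (b - 1)) blk
        in (Min (set ((fst r0 + f (dist E u DA) / real s0) # map fst rs)),
            card V + card E + snd r0 + sum_list (map snd rs))))"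
  by pat_completeness auto
termination
  by (relation "measure (\<lambda>(V, Eb, DA, f, s0, pick, sp, E, S, b). b + card S)")
     (auto simp: card_gt_0_iff)

end

theory Submission
  imports Defs
begin

(*
  Every call of BudgetFPT costs at most n + m.  A call with budget b and s entry nodes makes
  one call with (b, s - 1) and, since the chosen shortest path is simple and hence has at
  most l edges, at most l calls with (b - 1, s).  By Pascal's rule the number of calls is then
  O(l^b * binom(b + s - 1, b)), except when l = 1 and s = 1: there the recurrence alone only
  gives a bound linear in b.  But then the path is the single edge (u, DA), and after blocking
  it u has no path of length 1 to DA any more, so the child calls do not branch.
*)

declare budget_fpt.simps [simp del]

lemma is_path_iff_successively:
  "is_path E xs u v \<longleftrightarrow>
     xs \<noteq> [] \<and> hd xs = u \<and> last xs = v \<and> successively (\<lambda>x y. (x, y) \<in> E) xs"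
  by (simp add: is_path_def successively_conv_nth)

lemma is_path_mono: "is_path E xs u v \<Longrightarrow> E \<subseteq> E' \<Longrightarrow> is_path E' xs u v"
  by (auto simp: is_path_def)

lemma is_path_shortcut:
  assumes "is_path E (xs @ [y] @ ys @ [y] @ zs) u v"
  shows "is_path E (xs @ [y] @ zs) u v"
proof -
  let ?P = "\<lambda>x y. (x, y) \<in> E"
  have path: "successively ?P (xs @ [y] @ ys @ [y] @ zs)"
    using assms by (simp add: is_path_iff_successively)
  have "successively ?P (xs @ [y])"
    using path successively_append_iff[of ?P "xs @ [y]" "ys @ [y] @ zs"] by simp
  moreover have "successively ?P (y # zs)"
    using path successively_append_iff[of ?P "xs @ [y] @ ys" "[y] @ zs"] by simp
  ultimately have "successively ?P ((xs @ [y]) @ zs)"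
    by (cases zs) (auto simp: successively_append_iff successively_Cons)
  moreover have "hd (xs @ [y] @ zs) = u" "last (xs @ [y] @ zs) = v"
    using assms by (cases xs; cases zs; simp add: is_path_def)+
  ultimately show ?thesis by (simp add: is_path_iff_successively)
qed

lemma dist_le_length: "is_path E xs u v \<Longrightarrow> dist E u v \<le> enat (length xs - 1)"
  unfolding dist_def by (rule INF_lower) simp

lemma shortest_path_distinct:
  assumes path: "is_path E xs u v" and shortest: "enat (length xs - 1) = dist E u v"
  shows "distinct xs"
proof (rule ccontr)
  assume "\<not> distinct xs"
  then obtain ys y zs ws where xs: "xs = ys @ [y] @ zs @ [y] @ ws"
    using not_distinct_decomp by blast
  have "dist E u v \<le> enat (length (ys @ [y] @ ws) - 1)"
    using is_path_shortcut path xs dist_le_length by metis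
  also have "\<dots> < enat (length xs - 1)" using xs by simp
  finally show False using shortest by simp
qed

lemma is_path_nodes:
  assumes "E \<subseteq> V \<times> V" "v \<in> V" "is_path E xs u v"
  shows "set xs \<subseteq> V"
proof
  fix x assume "x \<in> set xs"
  then obtain i where i: "i < length xs" "xs ! i = x" by (auto simp: in_set_conv_nth)
  show "x \<in> V"
  proof (cases "Suc i < length xs")
    case True
    then show ?thesis using assms i by (force simp: is_path_def)
  next
    case False
    then have "i = length xs - 1" using i by simp
    moreover have "xs \<noteq> []" using i by auto
    ultimately have "x = last xs" using i by (simp add: last_conv_nth)
    then show ?thesis using assms by (simp add: is_path_def)
  qed
qed

lemma edges_of_path: "is_path E xs u v \<Longrightarrow> set (zip xs (tl xs)) \<subseteq> E"
  by (auto simp: is_path_def set_zip nth_tl)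

lemma edges_of_short_path:
  assumes "is_path E xs u v" "length xs \<le> 2"
  shows "set (zip xs (tl xs)) \<subseteq> {(u, v)}"
  using assms by (cases xs rule: remdups_adj.cases) (auto simp: is_path_def)

lemma distinct_path_le_max_attack_len:
  assumes "finite V" "E \<subseteq> V \<times> V" "DA \<in> V" "is_path E xs u DA" "distinct xs"
  shows "length xs - 1 \<le> max_attack_len E DA"
proof -
  let ?M = "{length xs - 1 | xs. (\<exists>u. is_path E xs u DA) \<and> distinct xs}"
  have "?M \<subseteq> {..card V}"
  proof
    fix m assume "m \<in> ?M"
    then obtain ys w where ys: "m = length ys - 1" "is_path E ys w DA" "distinct ys" by blast
    have "card (set ys) \<le> card V"
      using is_path_nodes[OF assms(2,3) ys(2)] assms(1) card_mono by blast
    then show "m \<in> {..card V}" using ys distinct_card[of ys] by auto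
  qed
  then have "finite ?M" using finite_subset by blast
  then show ?thesis unfolding max_attack_len_def using assms(4,5) by (intro Max_ge) blast+
qed

text \<open>The slack 2 absorbs the cost of the call itself in the recurrence; the factor 6 is
  forced by l = s = 1, where the cost is up to 4 (n + m).\<close>

definition cost_bound :: "nat \<Rightarrow> nat \<Rightarrow> nat \<Rightarrow> real" where
  "cost_bound l b s = 6 * real l ^ b * real (b + s - 1 choose b) - 2"

lemma cost_bound_ge_4:
  assumes "1 \<le> l" "1 \<le> s"
  shows "4 \<le> cost_bound l b s"
proof -
  have "1 \<le> real l ^ b" using assms(1) by simp
  moreover have "1 \<le> real (b + s - 1 choose b)"
    using zero_less_binomial[of b "b + s - 1"] assms(2) by linarith
  ultimately have "1 * 1 \<le> real l ^ b * real (b + s - 1 choose b)" by (intro mult_mono) simp_all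
  then show ?thesis unfolding cost_bound_def by linarith
qed

lemma cost_bound_recurrence:
  assumes "1 \<le> l" "b \<noteq> 0" "s \<noteq> 0"
  shows "1 + cost_bound l b (s - 1) + l * cost_bound l (b - 1) s \<le> cost_bound l b s"
proof -
  obtain b' s' where b: "b = Suc b'" and s: "s = Suc s'" using assms(2,3) not0_implies_Suc by blast
  define lP where "lP = real l ^ b"
  define A where "A = real (b' + s' choose b)"
  define B where "B = real (b' + s' choose b')"
  have "cost_bound l b (s - 1) = 6 * lP * A - 2"
    by (simp add: cost_bound_def A_def lP_def b s)
  moreover have "cost_bound l b s = 6 * lP * A + 6 * lP * B - 2"
    by (simp add: cost_bound_def A_def B_def lP_def b s distrib_left)
  moreover have "l * cost_bound l (b - 1) s = 6 * lP * B - 2 * l"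
    by (simp add: cost_bound_def B_def lP_def b s right_diff_distrib)
  moreover have "1 \<le> real l" using assms(1) by simp
  ultimately show ?thesis by linarith
qed

lemma cost_bound_recurrence_single:
  assumes "2 \<le> l" "b \<noteq> 0"
  shows "2 + l * cost_bound l (b - 1) 1 \<le> cost_bound l b 1"
proof -
  have "l * cost_bound l (b - 1) 1 = 6 * real l ^ b - 2 * l"
    using assms(2) by (simp add: cost_bound_def right_diff_distrib power_eq_if)
  moreover have "cost_bound l b 1 = 6 * real l ^ b - 2"
    by (simp add: cost_bound_def)
  moreover have "2 \<le> real l" using assms(1) by simp
  ultimately show ?thesis by linarith
qed

locale budget_fpt_run =
  fixes V :: "'v set" and E0 :: "('v \<times> 'v) set" and Eb :: "('v \<times> 'v) set" and DA :: 'v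
    and f :: "enat \<Rightarrow> real" and s0 :: nat
    and pick :: "('v \<times> 'v) set \<Rightarrow> 'v set \<Rightarrow> nat \<Rightarrow> 'v"
    and sp :: "('v \<times> 'v) set \<Rightarrow> 'v set \<Rightarrow> nat \<Rightarrow> 'v list"
  assumes choices: "valid_choices DA pick sp"
    and finite_V: "finite V" and E0_nodes: "E0 \<subseteq> V \<times> V" and DA_node: "DA \<in> V"
    and attack_len_pos: "1 \<le> max_attack_len E0 DA"
begin

abbreviation cost :: "('v \<times> 'v) set \<Rightarrow> 'v set \<Rightarrow> nat \<Rightarrow> nat" where
  "cost E S b \<equiv> snd (budget_fpt V Eb DA f s0 pick sp E S b)"

abbreviation l :: nat where
  "l \<equiv> max_attack_len E0 DA"

abbreviation N :: real where
  "N \<equiv> real (card V + card E0)"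

definition chosen_path :: "('v \<times> 'v) set \<Rightarrow> 'v set \<Rightarrow> nat \<Rightarrow> 'v list" where
  "chosen_path E S b = (if dist E (pick E S b) DA = \<infinity> then [] else sp E S b)"

definition branch_edges :: "('v \<times> 'v) set \<Rightarrow> 'v set \<Rightarrow> nat \<Rightarrow> ('v \<times> 'v) list" where
  "branch_edges E S b =
     remdups (filter (\<lambda>e. e \<in> Eb) (zip (chosen_path E S b) (tl (chosen_path E S b))))"

lemma pick_in: "S \<noteq> {} \<Longrightarrow> pick E S b \<in> S"
  using choices by (simp add: valid_choices_def)

lemma finite_E0: "finite E0"
  using E0_nodes finite_V by (meson finite_SigmaI finite_subset)

lemma card_le_N: "E \<subseteq> E0 \<Longrightarrow> real (card V + card E) \<le> N"
  using card_mono[OF finite_E0] by simp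

lemma cost_zero_budget: "cost E S 0 = card V + card E"
  by (subst budget_fpt.simps) simp

lemma cost_no_entries: "b \<noteq> 0 \<Longrightarrow> cost E {} b = card V + card E"
  by (subst budget_fpt.simps) simp

lemma cost_branch:
  assumes "b \<noteq> 0" "S \<noteq> {}" "finite S"
  shows "cost E S b = card V + card E + cost E (S - {pick E S b}) b
           + (\<Sum>e\<leftarrow>branch_edges E S b. cost (E - {e}) S (b - 1))"
  using assms pick_in[OF assms(2)]
  by (subst budget_fpt.simps) (simp add: Let_def o_def branch_edges_def chosen_path_def)

lemma chosen_path_cases:
  assumes "E \<subseteq> E0" "S \<noteq> {}"
  shows "chosen_path E S b = [] \<or>
    is_path E (chosen_path E S b) (pick E S b) DA \<and> length (chosen_path E S b) - 1 \<le> l"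
proof (cases "dist E (pick E S b) DA = \<infinity>")
  case False
  then have path: "is_path E (sp E S b) (pick E S b) DA"
    and shortest: "enat (length (sp E S b) - 1) = dist E (pick E S b) DA"
    using choices assms(2) unfolding valid_choices_def by blast+
  have "length (sp E S b) - 1 \<le> l"
    using distinct_path_le_max_attack_len[OF finite_V E0_nodes DA_node]
      is_path_mono[OF path assms(1)] shortest_path_distinct[OF path shortest] by blast
  then show ?thesis using False path by (simp add: chosen_path_def)
qed (simp add: chosen_path_def)

lemma length_branch_edges:
  assumes "E \<subseteq> E0" "S \<noteq> {}"
  shows "length (branch_edges E S b) \<le> l"
proof -
  let ?p = "chosen_path E S b"
  have "length (branch_edges E S b) \<le> length (filter (\<lambda>e. e \<in> Eb) (zip ?p (tl ?p)))"
    unfolding branch_edges_def by (rule length_remdups_leq)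
  also have "\<dots> \<le> length ?p - 1" using length_filter_le[of _ "zip ?p (tl ?p)"] by simp
  finally show ?thesis using chosen_path_cases[OF assms, of b] by auto
qed

lemma cost_branch_le:
  fixes R C :: real
  assumes "b \<noteq> 0" "S \<noteq> {}" "finite S" "E \<subseteq> E0"
    and "real (cost E (S - {pick E S b}) b) \<le> N * R"
    and "\<And>e. e \<in> set (branch_edges E S b) \<Longrightarrow> real (cost (E - {e}) S (b - 1)) \<le> N * C"
    and "0 \<le> C"
  shows "real (cost E S b) \<le> N * (1 + R + l * C)"
proof -
  let ?es = "branch_edges E S b"
  have "real (\<Sum>e\<leftarrow>?es. cost (E - {e}) S (b - 1))
      = (\<Sum>e\<leftarrow>?es. real (cost (E - {e}) S (b - 1)))"
    by (simp add: sum_list_of_nat[symmetric] o_def)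
  also have "\<dots> \<le> (\<Sum>e\<leftarrow>?es. N * C)" using assms(6) by (rule sum_list_mono)
  also have "\<dots> = length ?es * (N * C)" by (rule sum_list_triv)
  also have "\<dots> \<le> l * (N * C)"
    using length_branch_edges[OF assms(4,2)] assms(7) by (intro mult_right_mono) simp_all
  finally have "real (cost E S b) \<le> N + N * R + l * (N * C)"
    using cost_branch[OF assms(1-3), of E] card_le_N[OF assms(4)] assms(5) by simp
  then show ?thesis by (simp add: algebra_simps)
qed

lemma branch_edges_unit_len:
  assumes "E \<subseteq> E0" "S \<noteq> {}" "l = 1"
  shows "set (branch_edges E S b) \<subseteq> {(pick E S b, DA)} \<inter> E"
  using chosen_path_cases[OF assms(1,2), of b] assms(3)
    edges_of_short_path[of E "chosen_path E S b" "pick E S b" DA] edges_of_path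
  unfolding branch_edges_def by fastforce

text \<open>Blocking the only edge (u, DA) of the chosen path leaves u without an attack path
  that has an edge, so the child call does not branch.\<close>

lemma cost_unit_len_after_blocking:
  assumes "E \<subseteq> E0" "l = 1" "e \<in> set (branch_edges E {u} b)"
  shows "real (cost (E - {e}) {u} b') \<le> N * 2"
proof -
  have e: "e = (u, DA)"
    using branch_edges_unit_len[OF assms(1) _ assms(2)] assms(3) pick_in[of "{u}"] by blast
  let ?E = "E - {e}"
  have E: "?E \<subseteq> E0" using assms(1) by blast
  show ?thesis
  proof (cases "b' = 0")
    case True
    then show ?thesis using cost_zero_budget card_le_N[OF E] by simp
  next
    case False
    have "set (branch_edges ?E {u} b') \<subseteq> {(u, DA)} \<inter> ?E"
      using branch_edges_unit_len[OF E _ assms(2)] pick_in[of "{u}"] by blast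
    then have "branch_edges ?E {u} b' = []" using e by auto
    then have "cost ?E {u} b' = 2 * (card V + card ?E)"
      using cost_branch[OF False, of "{u}" ?E] pick_in[of "{u}"] cost_no_entries[OF False] by simp
    then show ?thesis using card_le_N[OF E] by simp
  qed
qed

lemma cost_single_entry_unit_len:
  assumes "E \<subseteq> E0" "l = 1"
  shows "real (cost E {u} b) \<le> N * 4"
proof (cases "b = 0")
  case True
  then show ?thesis using cost_zero_budget card_le_N[OF assms(1)] by simp
next
  case False
  have "real (cost E {u} b) \<le> N * (1 + 1 + real l * 2)"
  proof (rule cost_branch_le[OF False _ _ assms(1)])
    show "real (cost E ({u} - {pick E {u} b}) b) \<le> N * 1"
      using pick_in[of "{u}"] cost_no_entries[OF False] card_le_N[OF assms(1)] by simp
    show "real (cost (E - {e}) {u} (b - 1)) \<le> N * 2" if "e \<in> set (branch_edges E {u} b)" for e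
      using cost_unit_len_after_blocking[OF assms(1,2) that] by simp
  qed simp_all
  then show ?thesis using assms(2) by simp
qed

lemma N_mult_cost_bound_ge: "1 \<le> s \<Longrightarrow> N * 4 \<le> N * cost_bound l b s"
  using cost_bound_ge_4[OF attack_len_pos] by (intro mult_left_mono) simp_all

theorem cost_le_cost_bound:
  assumes "E \<subseteq> E0" "finite S" "1 \<le> card S"
  shows "real (cost E S b) \<le> N * cost_bound l b (card S)"
  using assms
proof (induction "b + card S" arbitrary: b E S rule: less_induct)
  case less
  have IH: "real (cost E' S' c) \<le> N * cost_bound l c (card S')"
    if "c + card S' < b + card S" "E' \<subseteq> E0" "finite S'" "1 \<le> card S'" for c E' S'
    using less.hyps that by blast
  have S: "S \<noteq> {}" using less.prems(3) by auto
  consider (zero) "b = 0" | (unit_len) "card S = 1" "l = 1"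
    | (several) "b \<noteq> 0" "2 \<le> card S" | (single) "b \<noteq> 0" "card S = 1" "2 \<le> l"
    using less.prems(3) attack_len_pos by linarith
  then show ?case
  proof cases
    case zero
    then show ?thesis
      using cost_zero_budget card_le_N[OF less.prems(1)] N_mult_cost_bound_ge[OF less.prems(3), of b]
      by simp
  next
    case unit_len
    then obtain u where "S = {u}" by (meson card_1_singletonE)
    then have "real (cost E S b) \<le> N * 4"
      using cost_single_entry_unit_len[OF less.prems(1) unit_len(2)] by simp
    then show ?thesis using N_mult_cost_bound_ge[OF less.prems(3), of b] by linarith
  next
    case several
    have "real (cost E S b)
        \<le> N * (1 + cost_bound l b (card S - 1) + l * cost_bound l (b - 1) (card S))"
    proof (rule cost_branch_le[OF several(1) S less.prems(2,1)])
      show "real (cost E (S - {pick E S b}) b) \<le> N * cost_bound l b (card S - 1)"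
        using IH[of b "S - {pick E S b}" E] less.prems pick_in[OF S] several by simp
      show "real (cost (E - {e}) S (b - 1)) \<le> N * cost_bound l (b - 1) (card S)" for e
        using less.prems several by (intro IH) auto
      show "0 \<le> cost_bound l (b - 1) (card S)"
        using cost_bound_ge_4[OF attack_len_pos less.prems(3), of "b - 1"] by simp
    qed
    also have "\<dots> \<le> N * cost_bound l b (card S)"
      using cost_bound_recurrence[OF attack_len_pos several(1)] several(2)
      by (intro mult_left_mono) simp_all
    finally show ?thesis .
  next
    case single
    then obtain u where "S = {u}" by (meson card_1_singletonE)
    have "real (cost E S b) \<le> N * (1 + 1 + l * cost_bound l (b - 1) 1)"
    proof (rule cost_branch_le[OF single(1) S less.prems(2,1)])
      show "real (cost E (S - {pick E S b}) b) \<le> N * 1"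
        using \<open>S = {u}\<close> pick_in[OF S] single cost_no_entries card_le_N[OF less.prems(1)] by simp
      show "real (cost (E - {e}) S (b - 1)) \<le> N * cost_bound l (b - 1) 1" for e
        using IH[of "b - 1" S "E - {e}"] less.prems single by auto
      show "0 \<le> cost_bound l (b - 1) 1" using cost_bound_ge_4[OF attack_len_pos, of 1 "b - 1"] by simp
    qed
    also have "\<dots> \<le> N * cost_bound l b (card S)"
      using cost_bound_recurrence_single[OF single(3,1)] single(2) by (intro mult_left_mono) simp_all
    finally show ?thesis .
  qed
qed

end

lemma budget_fpt_cost_le:
  assumes inst: "valid_instance V E Eb DA S" and choices: "valid_choices DA pick sp"
    and entries: "1 \<le> card S" and len: "1 \<le> max_attack_len E DA"
  shows "real (snd (budget_fpt V Eb DA f (card S) pick sp E S b))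
    \<le> real (card V + card E) * (6 * real (max_attack_len E DA ^ b) * real (b + card S - 1 choose b))"
proof -
  interpret budget_fpt_run V E Eb DA f "card S" pick sp
    using inst choices len by unfold_locales (auto simp: valid_instance_def)
  have "finite S" using inst finite_V finite_subset by (auto simp: valid_instance_def)
  then have "real (cost E S b) \<le> N * cost_bound l b (card S)"
    using entries by (intro cost_le_cost_bound) simp_all
  then show ?thesis by (simp add: cost_bound_def right_diff_distrib)
qed

theorem proposition1:
  "\<forall>k::nat. \<exists>C::real. \<forall>(V::'v set) E Eb DA S b f pick sp.
     valid_instance V E Eb DA S \<and> card E \<le> k * card V \<and>
     antimono f \<and> f \<infinity> = 0 \<and> valid_choices DA pick sp \<and>
     card S \<ge> 1 \<and> max_attack_len E DA \<ge> 1 \<longrightarrow>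
     real (snd (budget_fpt V Eb DA f (card S) pick sp E S b))
       \<le> C * real (max_attack_len E DA ^ b) * real ((b + card S - 1) choose b) * real (card V)"
proof -
  \<comment> \<open>The running time does not depend on the values of f.\<close>
  have "real (snd (budget_fpt V Eb DA f (card S) pick sp E S b))
      \<le> 6 * real (k + 1) * real (max_attack_len E DA ^ b) * real (b + card S - 1 choose b) * card V"
    if inst: "valid_instance V E Eb DA S" and sparse: "card E \<le> k * card V"
      and choices: "valid_choices DA pick sp" and entries: "1 \<le> card S"
      and len: "1 \<le> max_attack_len E DA"
    for k and V :: "'v set" and E Eb DA S b and f :: "enat \<Rightarrow> real" and pick sp
  proof -
    define X where "X = 6 * real (max_attack_len E DA ^ b) * real (b + card S - 1 choose b)"
    have "real (snd (budget_fpt V Eb DA f (card S) pick sp E S b)) \<le> real (card V + card E) * X"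
      unfolding X_def by (rule budget_fpt_cost_le[OF inst choices entries len])
    also have "\<dots> \<le> real ((k + 1) * card V) * X"
      using sparse by (intro mult_right_mono of_nat_mono) (simp_all add: X_def)
    finally show ?thesis by (simp add: X_def algebra_simps)
  qed
  then show ?thesis by blast
qed

end
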